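(* Let $\rho$ be an indecomposable representation of $D^{2,2,2}$, and for $a\in D^{2,2,2}$ write $$S(a)=\sum_{p=1}^3\varphi_p(\Phi^+\rho(a))\subseteq X_0.$$ 1. If $v_1,v_2,v_3\in D^{2,2,2}$ are perfect, then $S(v_1v_2v_3)=S(v_1)\cap S(v_2)\cap S(v_3)$. 2. If $v$ is perfect and $u\in D^{2,2,2}$ is arbitrary, then $S(vu)=S(v)\cap S(u)$.
   Context: $D^{2,2,2}$ is the modular lattice generated by $x_1,y_1,x_2,y_2,x_3,y_3$ subject only to $x_i\subseteq y_i$ ($i=1,2,3$), with a greatest element $I$ adjoined. Meet is written $ab$, join $a+b$. A representation $\rho$ of $D^{2,2,2}$ in a finite-dimensional vector space $X_0$ is a lattice morphism from $D^{2,2,2}$ to the subspace lattice of $X_0$, with $\rho(I)=X_0$. Write $X_i=\rho(x_i)\subseteq Y_i=\rho(y_i)$. $\rho$ is indecomposable if $X_0\neq0$ and there is no decomposition $X_0=X'\oplus X''$ with $X',X''\neq0$ and $\rho(a)=(\rho(a)\cap X')+(\rho(a)\cap X'')$ for all $a$. An element $a$ is perfect if $\rho(a)\in\{0,X_0\}$ for every indecomposable $\rho$. Put $R=Y_1\oplus Y_2\oplus Y_3$ and $X^1_0=\{(\eta_1,\eta_2,\eta_3)\in R:\sum\eta_i=0\}$. Let $G'_i\subseteq R$ be the triples with $i$-th coordinate in $X_i$, and $H'_i\subseteq R$ the triples with $i$-th coordinate $0$. $\Phi^+\rho$ is the representation in $X^1_0$ with $\Phi^+\rho(y_i)=G'_i\cap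 X^1_0$, $\Phi^+\rho(x_i)=H'_i\cap X^1_0$, $\Phi^+\rho(I)=X^1_0$. The elementary map $\varphi_p:X^1_0\to X_0$ is $(\eta_1,\eta_2,\eta_3)\mapsto\eta_p$; $\varphi_p(S)$ denotes the image of a subspace $S$. *)

theory Defs
  imports Complex_Main "HOL-Library.Product_Plus" "HOL-Library.Function_Algebras"
begin

datatype idx = i1 | i2 | i3

text \<open>Elements of D222 are represented by terms; every notion below depends only
  on the value of a term under representations, hence only on the element of
  the free modular lattice (modulo x_i <= y_i) that the term denotes.\<close>
datatype lt = Xg idx | Yg idx | Top | Meet lt lt | Join lt lt

definition ssum :: "'w::plus set \<Rightarrow> 'w set \<Rightarrow> 'w set" where
  "ssum A B = {a + b | a b. a \<in> A \<and> b \<in> B}"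

fun ev :: "'w::plus set \<Rightarrow> (idx \<Rightarrow> 'w set) \<Rightarrow> (idx \<Rightarrow> 'w set) \<Rightarrow> lt \<Rightarrow> 'w set" where
  "ev X0 Xs Ys (Xg i) = Xs i"
| "ev X0 Xs Ys (Yg i) = Ys i"
| "ev X0 Xs Ys Top = X0"
| "ev X0 Xs Ys (Meet a b) = ev X0 Xs Ys a \<inter> ev X0 Xs Ys b"
| "ev X0 Xs Ys (Join a b) = ssum (ev X0 Xs Ys a) (ev X0 Xs Ys b)"

definition is_rep ::
  "('a::field \<Rightarrow> 'v::ab_group_add \<Rightarrow> 'v) \<Rightarrow> 'v set \<Rightarrow> (idx \<Rightarrow> 'v set) \<Rightarrow> (idx \<Rightarrow> 'v set) \<Rightarrow> bool" where
  "is_rep s X0 Xs Ys \<longleftrightarrow>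
     module.subspace s X0 \<and> (\<exists>B. finite B \<and> B \<subseteq> X0 \<and> module.span s B = X0) \<and>
     (\<forall>i. module.subspace s (Xs i) \<and> module.subspace s (Ys i) \<and> Xs i \<subseteq> Ys i \<and> Ys i \<subseteq> X0)"

definition indecomposable ::
  "('a::field \<Rightarrow> 'v::ab_group_add \<Rightarrow> 'v) \<Rightarrow> 'v set \<Rightarrow> (idx \<Rightarrow> 'v set) \<Rightarrow> (idx \<Rightarrow> 'v set) \<Rightarrow> bool" where
  "indecomposable s X0 Xs Ys \<longleftrightarrow>
     X0 \<noteq> {0} \<and>
     \<not> (\<exists>X' X''. module.subspace s X' \<and> module.subspace s X'' \<and>
          X' \<inter> X'' = {0} \<and> ssum X' X'' = X0 \<and> X' \<noteq> {0} \<and> X'' \<noteq> {0} \<and>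
          (\<forall>a. ev X0 Xs Ys a = ssum (ev X0 Xs Ys a \<inter> X') (ev X0 Xs Ys a \<inter> X'')))"

text \<open>Universal ambient space nat => 'a: every finite-dimensional vector space
  over 'a is isomorphic to a subspace of it.\<close>
definition uscale :: "'a::field \<Rightarrow> (nat \<Rightarrow> 'a) \<Rightarrow> (nat \<Rightarrow> 'a)" where
  "uscale c f = (\<lambda>n. c * f n)"

definition perfect :: "'a::field itself \<Rightarrow> lt \<Rightarrow> bool" where
  "perfect _ a \<longleftrightarrow>
     (\<forall>(X0 :: (nat \<Rightarrow> 'a) set) Xs Ys.
        is_rep (uscale :: 'a \<Rightarrow> _) X0 Xs Ys \<and> indecomposable (uscale :: 'a \<Rightarrow> _) X0 Xs Ys
        \<longrightarrow> ev X0 Xs Ys a \<in> {{0}, X0})"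

fun coord :: "idx \<Rightarrow> 'w \<times> 'w \<times> 'w \<Rightarrow> 'w" where
  "coord i1 (a, b, c) = a"
| "coord i2 (a, b, c) = b"
| "coord i3 (a, b, c) = c"

definition Rsp :: "(idx \<Rightarrow> 'w set) \<Rightarrow> ('w \<times> 'w \<times> 'w) set" where
  "Rsp Ys = {t. \<forall>i. coord i t \<in> Ys i}"

definition X10 :: "(idx \<Rightarrow> 'w::monoid_add set) \<Rightarrow> ('w \<times> 'w \<times> 'w) set" where
  "X10 Ys = {t \<in> Rsp Ys. coord i1 t + coord i2 t + coord i3 t = 0}"

definition Gp :: "(idx \<Rightarrow> 'w set) \<Rightarrow> (idx \<Rightarrow> 'w set) \<Rightarrow> idx \<Rightarrow> ('w \<times> 'w \<times> 'w) set" where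
  "Gp Xs Ys i = {t \<in> Rsp Ys. coord i t \<in> Xs i}"

definition Hp :: "(idx \<Rightarrow> 'w::zero set) \<Rightarrow> idx \<Rightarrow> ('w \<times> 'w \<times> 'w) set" where
  "Hp Ys i = {t \<in> Rsp Ys. coord i t = 0}"

definition PhiPlus_ev :: "(idx \<Rightarrow> 'w::monoid_add set) \<Rightarrow> (idx \<Rightarrow> 'w set) \<Rightarrow> lt \<Rightarrow> ('w \<times> 'w \<times> 'w) set" where
  "PhiPlus_ev Xs Ys a =
     ev (X10 Ys) (\<lambda>i. Hp Ys i \<inter> X10 Ys) (\<lambda>i. Gp Xs Ys i \<inter> X10 Ys) a"

definition Sset :: "(idx \<Rightarrow> 'w::monoid_add set) \<Rightarrow> (idx \<Rightarrow> 'w set) \<Rightarrow> lt \<Rightarrow> 'w set" where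
  "Sset Xs Ys a =
     ssum (ssum (coord i1 ` PhiPlus_ev Xs Ys a) (coord i2 ` PhiPlus_ev Xs Ys a))
          (coord i3 ` PhiPlus_ev Xs Ys a)"

end

theory Submission
  imports Defs
begin

(*
  Write W = X^1_0 and suppose W = A + B is a nontrivial decomposition of Phi^+ rho.
  Compatibility with Phi^+ rho(x_p) makes phi_p(A) and phi_p(B) meet only in 0. Hence
  A_0 = sum_p phi_p(A) and B_0 = sum_p phi_p(B) are independent: if sum_p a_p = sum_p b_p, the
  triple (a_p - b_p)_p lies in W, its A-component has coordinates a_p, and the coordinates of a
  vector of W sum to 0. Completing A_0 by a complement containing B_0 and complements C_p of
  phi_p(W) in Y_p adapted to X_p (compatibility with Phi^+ rho(y_p)) decomposes rho.
  So Phi^+ rho is indecomposable once W is nonzero, and Phi^+ rho(v) is 0 or W for perfect v.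
  As Phi^+ rho preserves meets and S is monotone, S(v u) is then S(0) = 0 or S(u), a subset of
  S(W) = S(v); part 1 is part 2 applied twice.

  Perfectness only quantifies over representations inside nat => 'a; rho is transported there
  along an injective linear map.
*)

lemma ssum_mono: "A \<subseteq> A' \<Longrightarrow> B \<subseteq> B' \<Longrightarrow> ssum A B \<subseteq> ssum A' B'"
  unfolding ssum_def by blast

lemma ssum_assoc:
  fixes A B C :: "'b::semigroup_add set"
  shows "ssum (ssum A B) C = ssum A (ssum B C)"
proof -
  have "x \<in> ssum (ssum A B) C \<longleftrightarrow> (\<exists>a\<in>A. \<exists>b\<in>B. \<exists>c\<in>C. x = a + b + c)"
    and "x \<in> ssum A (ssum B C) \<longleftrightarrow> (\<exists>a\<in>A. \<exists>b\<in>B. \<exists>c\<in>C. x = a + b + c)" for x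
    unfolding ssum_def by (blast, force simp: add.assoc)
  then show ?thesis by blast
qed

lemma subset_ssum_left: "(0::'b::monoid_add) \<in> B \<Longrightarrow> A \<subseteq> ssum A B"
  unfolding ssum_def by force

lemma subset_ssum_right: "(0::'b::monoid_add) \<in> A \<Longrightarrow> B \<subseteq> ssum A B"
  unfolding ssum_def by force

lemma image_ssum:
  assumes "\<And>x y. f (x + y) = f x + f y"
  shows "f ` ssum A B = ssum (f ` A) (f ` B)"
proof
  show "f ` ssum A B \<subseteq> ssum (f ` A) (f ` B)"
    unfolding ssum_def using assms by blast
  show "ssum (f ` A) (f ` B) \<subseteq> f ` ssum A B"
    unfolding ssum_def using assms by (auto intro!: image_eqI)
qed

definition ssum3 :: "(idx \<Rightarrow> 'w::plus set) \<Rightarrow> 'w set" where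
  "ssum3 F = ssum (ssum (F i1) (F i2)) (F i3)"

lemma mem_ssum3: "x \<in> ssum3 F \<longleftrightarrow> (\<exists>f. (\<forall>i. f i \<in> F i) \<and> x = f i1 + f i2 + f i3)"
proof
  assume "x \<in> ssum3 F"
  then obtain a b c where abc: "a \<in> F i1" "b \<in> F i2" "c \<in> F i3" "x = a + b + c"
    unfolding ssum3_def ssum_def by blast
  have "\<forall>i. case_idx a b c i \<in> F i" by (rule allI, case_tac i) (use abc in simp_all)
  with abc(4) show "\<exists>f. (\<forall>i. f i \<in> F i) \<and> x = f i1 + f i2 + f i3" by force
next
  assume "\<exists>f. (\<forall>i. f i \<in> F i) \<and> x = f i1 + f i2 + f i3"
  then show "x \<in> ssum3 F" unfolding ssum3_def ssum_def by blast
qed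

lemma ssum3_mono: "(\<And>i. F i \<subseteq> G i) \<Longrightarrow> ssum3 F \<subseteq> ssum3 G"
  unfolding ssum3_def by (intro ssum_mono) auto

lemma subset_ssum3:
  assumes "\<And>j. (0::'w::monoid_add) \<in> F j"
  shows "F i \<subseteq> ssum3 F"
proof
  fix x assume "x \<in> F i"
  then have "\<forall>j. (if j = i then x else 0) \<in> F j" using assms by simp
  then show "x \<in> ssum3 F"
    unfolding mem_ssum3 by (intro exI[of _ "\<lambda>j. if j = i then x else 0"]) (cases i; simp)
qed

lemma ssum3_zero: "ssum3 (\<lambda>i. {0::'w::monoid_add}) = {0}"
  unfolding ssum3_def ssum_def by auto

context vector_space
begin

lemma subspace_ssum: "subspace A \<Longrightarrow> subspace B \<Longrightarrow> subspace (ssum A B)"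
  unfolding ssum_def by (rule subspace_sums)

lemma ssum_subset_subspace: "subspace Z \<Longrightarrow> A \<subseteq> Z \<Longrightarrow> B \<subseteq> Z \<Longrightarrow> ssum A B \<subseteq> Z"
  unfolding ssum_def using subspace_add by blast

lemma subspace_ssum3: "(\<And>i. subspace (F i)) \<Longrightarrow> subspace (ssum3 F)"
  unfolding ssum3_def by (intro subspace_ssum) auto

lemma ssum3_subset_subspace: "subspace Z \<Longrightarrow> (\<And>i. F i \<subseteq> Z) \<Longrightarrow> ssum3 F \<subseteq> Z"
  unfolding ssum3_def by (intro ssum_subset_subspace) auto

end

section \<open>Subspaces compatible with a direct sum\<close>

definition splits :: "'w::plus set \<Rightarrow> 'w set \<Rightarrow> 'w set \<Rightarrow> bool" where
  "splits P Q U \<longleftrightarrow> U = ssum (U \<inter> P) (U \<inter> Q)"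

lemma splitsD:
  assumes "splits P Q U" "x \<in> U"
  obtains p q where "p \<in> U \<inter> P" "q \<in> U \<inter> Q" "x = p + q"
proof -
  have "U \<subseteq> ssum (U \<inter> P) (U \<inter> Q)" using assms(1) unfolding splits_def by (rule equalityD1)
  with assms(2) that show thesis unfolding ssum_def by blast
qed

context vector_space
begin

lemma splitsI:
  assumes "subspace U" "U \<subseteq> ssum V W" "V \<subseteq> U \<inter> P" "W \<subseteq> U \<inter> Q"
  shows "splits P Q U"
  unfolding splits_def
proof
  show "U \<subseteq> ssum (U \<inter> P) (U \<inter> Q)" using assms(2-4) ssum_mono by blast
  show "ssum (U \<inter> P) (U \<inter> Q) \<subseteq> U" using assms(1) ssum_subset_subspace by blast
qed

lemma splits_Int:
  assumes "subspace P" "subspace Q" "P \<inter> Q = {0}" "subspace U" "subspace V"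
    and U: "splits P Q U" and V: "splits P Q V"
  shows "splits P Q (U \<inter> V)"
proof (rule splitsI[OF subspace_inter[OF \<open>subspace U\<close> \<open>subspace V\<close>] subsetI order_refl order_refl])
  fix w assume w: "w \<in> U \<inter> V"
  then obtain u1 u2 where u: "u1 \<in> U \<inter> P" "u2 \<in> U \<inter> Q" "w = u1 + u2"
    using splitsD[OF U] by blast
  obtain v1 v2 where v: "v1 \<in> V \<inter> P" "v2 \<in> V \<inter> Q" "w = v1 + v2"
    using w splitsD[OF V] by blast
  have "u1 - v1 = v2 - u2" using u v by (simp add: algebra_simps)
  moreover have "u1 - v1 \<in> P" "v2 - u2 \<in> Q" using u v assms(1,2) subspace_diff by blast+
  ultimately have "v2 - u2 \<in> P \<inter> Q" by simp
  then have "u1 = v1" "u2 = v2" using assms(3) \<open>u1 - v1 = v2 - u2\<close> by auto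
  then show "w \<in> ssum (U \<inter> V \<inter> P) (U \<inter> V \<inter> Q)"
    unfolding ssum_def using u v by blast
qed

lemma splits_ssum:
  assumes "subspace P" "subspace Q" "subspace U" "subspace V"
    and U: "splits P Q U" and V: "splits P Q V"
  shows "splits P Q (ssum U V)"
proof (rule splitsI[OF subspace_ssum[OF \<open>subspace U\<close> \<open>subspace V\<close>],
      where V = "ssum (U \<inter> P) (V \<inter> P)" and W = "ssum (U \<inter> Q) (V \<inter> Q)"])
  show "ssum U V \<subseteq> ssum (ssum (U \<inter> P) (V \<inter> P)) (ssum (U \<inter> Q) (V \<inter> Q))"
  proof
    fix w assume "w \<in> ssum U V"
    then obtain u v where "u \<in> U" "v \<in> V" "w = u + v" unfolding ssum_def by blast
    moreover obtain u1 u2 where "u1 \<in> U \<inter> P" "u2 \<in> U \<inter> Q" "u = u1 + u2"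
      using splitsD[OF U \<open>u \<in> U\<close>] by blast
    moreover obtain v1 v2 where "v1 \<in> V \<inter> P" "v2 \<in> V \<inter> Q" "v = v1 + v2"
      using splitsD[OF V \<open>v \<in> V\<close>] by blast
    ultimately have w: "w = (u1 + v1) + (u2 + v2)" by (simp add: algebra_simps)
    have "u1 + v1 \<in> ssum (U \<inter> P) (V \<inter> P)" "u2 + v2 \<in> ssum (U \<inter> Q) (V \<inter> Q)"
      using \<open>u1 \<in> U \<inter> P\<close> \<open>v1 \<in> V \<inter> P\<close> \<open>u2 \<in> U \<inter> Q\<close> \<open>v2 \<in> V \<inter> Q\<close>
      unfolding ssum_def by blast+
    with w show "w \<in> ssum (ssum (U \<inter> P) (V \<inter> P)) (ssum (U \<inter> Q) (V \<inter> Q))"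
      unfolding ssum_def by blast
  qed
  show "ssum (U \<inter> P) (V \<inter> P) \<subseteq> ssum U V \<inter> P"
    using ssum_mono[of "U \<inter> P" U "V \<inter> P" V] ssum_subset_subspace[OF \<open>subspace P\<close>] by blast
  show "ssum (U \<inter> Q) (V \<inter> Q) \<subseteq> ssum U V \<inter> Q"
    using ssum_mono[of "U \<inter> Q" U "V \<inter> Q" V] ssum_subset_subspace[OF \<open>subspace Q\<close>] by blast
qed

lemma subspace_ev:
  assumes "subspace X0" "\<And>i. subspace (Xs i)" "\<And>i. subspace (Ys i)"
  shows "subspace (ev X0 Xs Ys a)"
  by (induction a) (auto intro: assms subspace_ssum subspace_inter)

lemma splits_ev:
  assumes P: "subspace P" and Q: "subspace Q" and PQ: "P \<inter> Q = {0}"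
    and sub: "subspace X0" "\<And>i. subspace (Xs i)" "\<And>i. subspace (Ys i)"
    and spl: "splits P Q X0" "\<And>i. splits P Q (Xs i)" "\<And>i. splits P Q (Ys i)"
  shows "splits P Q (ev X0 Xs Ys a)"
  by (induction a)
    (auto intro: spl splits_Int[OF P Q PQ] splits_ssum[OF P Q] subspace_ev[OF sub])

lemma is_repD:
  assumes "is_rep scale X0 Xs Ys"
  shows "subspace X0" "subspace (Xs i)" "subspace (Ys i)" "Xs i \<subseteq> Ys i" "Ys i \<subseteq> X0"
  using assms unfolding is_rep_def by auto

lemma ev_subset_top:
  assumes "is_rep scale X0 Xs Ys"
  shows "ev X0 Xs Ys a \<subseteq> X0"
proof (induction a)
  case (Join a b)
  then show ?case using ssum_subset_subspace[OF is_repD(1)[OF assms]] by simp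
qed (use is_repD[OF assms] in fastforce)+

lemma subspace_ev_rep: "is_rep scale X0 Xs Ys \<Longrightarrow> subspace (ev X0 Xs Ys a)"
  unfolding is_rep_def by (intro subspace_ev) auto

end

definition nontrivial_decomposition ::
  "('a::field \<Rightarrow> 'v::ab_group_add \<Rightarrow> 'v) \<Rightarrow> 'v set \<Rightarrow> (idx \<Rightarrow> 'v set) \<Rightarrow> (idx \<Rightarrow> 'v set) \<Rightarrow>
    'v set \<Rightarrow> 'v set \<Rightarrow> bool" where
  "nontrivial_decomposition s X0 Xs Ys P Q \<longleftrightarrow>
     module.subspace s P \<and> module.subspace s Q \<and> P \<inter> Q = {0} \<and> ssum P Q = X0 \<and>
     P \<noteq> {0} \<and> Q \<noteq> {0} \<and> (\<forall>a. splits P Q (ev X0 Xs Ys a))"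

lemma indecomposable_iff:
  "indecomposable s X0 Xs Ys \<longleftrightarrow>
     X0 \<noteq> {0} \<and> \<not> (\<exists>P Q. nontrivial_decomposition s X0 Xs Ys P Q)"
  unfolding indecomposable_def nontrivial_decomposition_def splits_def by blast

context vector_space
begin

lemma complement_exists:
  assumes "subspace S" "subspace Z" "S \<subseteq> Z"
  obtains C where "subspace C" "C \<subseteq> Z" "S \<inter> C = {0}" "ssum S C = Z"
proof -
  obtain BS where BS: "BS \<subseteq> S" "independent BS" "S \<subseteq> span BS"
    using maximal_independent_subset by blast
  obtain B where B: "BS \<subseteq> B" "B \<subseteq> Z" "independent B" "Z \<subseteq> span B"
    using maximal_independent_subset_extend[of BS Z] BS assms(3) by blast
  have span_BS: "span BS = S" using span_subspace[OF BS(1,3) assms(1)] .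
  have span_rest: "span (B - BS) \<subseteq> Z" using span_minimal B(2) assms(2) by blast
  have "S \<inter> span (B - BS) \<subseteq> {0}"
  proof
    fix x assume x: "x \<in> S \<inter> span (B - BS)"
    have "representation B x = representation BS x"
      using representation_extend[OF B(3)] x span_BS B(1) by blast
    moreover have "representation B x = representation (B - BS) x"
      using representation_extend[OF B(3)] x by blast
    ultimately have "representation B x b = 0" for b
      using representation_ne_zero[of BS x b] representation_ne_zero[of "B - BS" x b] by auto
    moreover have "x \<in> span B" using x span_BS B(1) span_mono by blast
    ultimately show "x \<in> {0}" using sum_nonzero_representation_eq[OF B(3), of x] by simp
  qed
  moreover have "ssum S (span (B - BS)) = Z"
  proof
    show "ssum S (span (B - BS)) \<subseteq> Z"
      using assms span_rest by (intro ssum_subset_subspace)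
    have "span B = span (BS \<union> (B - BS))" using B(1) by (simp add: Un_absorb1)
    then show "Z \<subseteq> ssum S (span (B - BS))"
      using B(4) span_BS unfolding span_Un ssum_def by blast
  qed
  moreover have "0 \<in> S" using subspace_0[OF assms(1)] .
  ultimately show thesis using span_rest span_zero by (intro that[of "span (B - BS)"]) auto
qed

lemma complement_containing:
  assumes U: "subspace U" and V: "subspace V" and Z: "subspace Z"
    and "U \<subseteq> Z" "V \<subseteq> Z" and UV: "U \<inter> V = {0}"
  obtains V' where "subspace V'" "V \<subseteq> V'" "V' \<subseteq> Z" "U \<inter> V' = {0}" "ssum U V' = Z"
proof -
  have "ssum U V \<subseteq> Z" using ssum_subset_subspace[OF Z] assms(4,5) by blast
  then obtain C where C: "subspace C" "C \<subseteq> Z" "ssum U V \<inter> C = {0}" "ssum (ssum U V) C = Z"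
    using complement_exists[OF subspace_ssum[OF U V] Z] by blast
  have VC: "subspace (ssum V C)" using subspace_ssum[OF V C(1)] .
  have "U \<inter> ssum V C \<subseteq> {0}"
  proof
    fix u assume "u \<in> U \<inter> ssum V C"
    then obtain v c where vc: "u \<in> U" "v \<in> V" "c \<in> C" "u = v + c" unfolding ssum_def by blast
    have "c = u + - v" "- v \<in> V" using vc subspace_neg[OF V] by (auto simp: algebra_simps)
    then have "c \<in> ssum U V" unfolding ssum_def using vc(1) by blast
    then have "c = 0" using C(3) vc(3) by blast
    then show "u \<in> {0}" using vc UV by auto
  qed
  then have "U \<inter> ssum V C = {0}" using subspace_0[OF U] subspace_0[OF VC] by blast
  moreover have "V \<subseteq> ssum V C" using subset_ssum_left subspace_0[OF C(1)] .
  moreover have "ssum V C \<subseteq> Z" using ssum_subset_subspace[OF Z] assms(5) C(2) by blast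
  moreover have "ssum U (ssum V C) = Z" using C(4) by (simp add: ssum_assoc)
  ultimately show thesis using that VC by blast
qed

lemma complement_compatible:
  assumes P: "subspace P" and X: "subspace X" and Y: "subspace Y" and PY: "P \<subseteq> Y" and XY: "X \<subseteq> Y"
  obtains C where "subspace C" "C \<subseteq> Y" "P \<inter> C = {0}" "ssum P C = Y"
    "X \<subseteq> ssum (X \<inter> P) (X \<inter> C)"
proof -
  obtain D where D: "subspace D" "D \<subseteq> X" "X \<inter> P \<inter> D = {0}" "ssum (X \<inter> P) D = X"
    using complement_exists[OF subspace_inter[OF X P] X] by blast
  have "P \<inter> D = {0}" using D(2,3) subspace_0[OF P] subspace_0[OF D(1)] by blast
  moreover have "D \<subseteq> Y" using D(2) XY by blast
  ultimately obtain C where C: "subspace C" "D \<subseteq> C" "C \<subseteq> Y" "P \<inter> C = {0}" "ssum P C = Y"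
    using complement_containing[OF P D(1) Y PY] by blast
  have "X \<subseteq> ssum (X \<inter> P) (X \<inter> C)"
    using D(2,4) C(2) ssum_mono[of "X \<inter> P" "X \<inter> P" D "X \<inter> C"] by blast
  with C that show thesis by blast
qed

lemma finite_span_subspace:
  assumes "subspace S" "S \<subseteq> span F" "finite F"
  obtains B where "finite B" "B \<subseteq> S" "span B = S"
proof -
  obtain B where "B \<subseteq> S" "independent B" "S \<subseteq> span B"
    using maximal_independent_subset by blast
  moreover have "finite B"
    using independent_span_bound[OF assms(3) \<open>independent B\<close>] \<open>B \<subseteq> S\<close> assms(2) by blast
  ultimately show thesis using that span_subspace[OF _ _ assms(1)] by blast
qed

end

section \<open>Transport along injective linear maps\<close>

context Vector_Spaces.linear
begin

lemma ev_image:
  assumes "inj_on f X0" "is_rep s1 X0 Xs Ys"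
  shows "ev (f ` X0) (\<lambda>i. f ` Xs i) (\<lambda>i. f ` Ys i) a = f ` ev X0 Xs Ys a"
proof (induction a)
  case (Meet a b)
  then show ?case
    using inj_on_image_Int[OF assms(1) vs1.ev_subset_top[OF assms(2)] vs1.ev_subset_top[OF assms(2)]]
    by simp
next
  case (Join a b)
  then show ?case using image_ssum[of f] add by simp
qed auto

lemma image_subset_zero_iff:
  assumes "inj_on f X0" "0 \<in> X0" "U \<subseteq> X0"
  shows "f ` U \<subseteq> {0} \<longleftrightarrow> U \<subseteq> {0}"
proof
  assume "f ` U \<subseteq> {0}"
  show "U \<subseteq> {0}"
  proof
    fix x assume "x \<in> U"
    then have "f x = f 0" using \<open>f ` U \<subseteq> {0}\<close> by auto
    then have "x = 0" using inj_onD[OF assms(1)] \<open>x \<in> U\<close> assms(2,3) by blast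
    then show "x \<in> {0}" by simp
  qed
next
  assume "U \<subseteq> {0}"
  then show "f ` U \<subseteq> {0}" by auto
qed

lemma is_rep_image:
  assumes "is_rep s1 X0 Xs Ys"
  shows "is_rep s2 (f ` X0) (\<lambda>i. f ` Xs i) (\<lambda>i. f ` Ys i)"
proof -
  obtain B where "finite B" "B \<subseteq> X0" "vs1.span B = X0" using assms unfolding is_rep_def by blast
  then have "finite (f ` B) \<and> f ` B \<subseteq> f ` X0 \<and> vs2.span (f ` B) = f ` X0"
    by (auto simp: span_image)
  then show ?thesis
    using assms unfolding is_rep_def by (blast intro: subspace_image)
qed

lemma nontrivial_decomposition_image:
  assumes inj: "inj_on f X0" and rep: "is_rep s1 X0 Xs Ys"
    and dec: "nontrivial_decomposition s1 X0 Xs Ys P Q"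
  shows "nontrivial_decomposition s2 (f ` X0) (\<lambda>i. f ` Xs i) (\<lambda>i. f ` Ys i) (f ` P) (f ` Q)"
proof -
  have P: "vs1.subspace P" and Q: "vs1.subspace Q" and "P \<inter> Q = {0}" "ssum P Q = X0"
    and "P \<noteq> {0}" "Q \<noteq> {0}" and spl: "\<And>a. splits P Q (ev X0 Xs Ys a)"
    using dec unfolding nontrivial_decomposition_def by auto
  have "P \<subseteq> X0" "Q \<subseteq> X0"
    using \<open>ssum P Q = X0\<close> subset_ssum_left[OF vs1.subspace_0[OF Q]]
      subset_ssum_right[OF vs1.subspace_0[OF P]] by auto
  have image_Int: "f ` (U \<inter> V) = f ` U \<inter> f ` V" if "U \<subseteq> X0" "V \<subseteq> X0" for U V
    using inj_on_image_Int[OF inj that] .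
  have "f ` P \<inter> f ` Q = {0}" using image_Int[OF \<open>P \<subseteq> X0\<close> \<open>Q \<subseteq> X0\<close>] \<open>P \<inter> Q = {0}\<close> by simp
  moreover have "ssum (f ` P) (f ` Q) = f ` X0" using image_ssum[of f] add \<open>ssum P Q = X0\<close> by metis
  moreover have "splits (f ` P) (f ` Q) (f ` ev X0 Xs Ys a)" for a
  proof -
    have E: "ev X0 Xs Ys a \<subseteq> X0" using vs1.ev_subset_top[OF rep] .
    have "f ` ev X0 Xs Ys a = f ` ssum (ev X0 Xs Ys a \<inter> P) (ev X0 Xs Ys a \<inter> Q)"
      using spl unfolding splits_def by metis
    then show ?thesis
      unfolding splits_def image_ssum[of f, OF add]
      using image_Int[OF E \<open>P \<subseteq> X0\<close>] image_Int[OF E \<open>Q \<subseteq> X0\<close>] by simp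
  qed
  moreover have "f ` P \<noteq> {0}" "f ` Q \<noteq> {0}"
  proof -
    have X0: "0 \<in> X0" using vs1.subspace_0[OF vs1.is_repD(1)[OF rep]] .
    have "\<not> P \<subseteq> {0}" "\<not> Q \<subseteq> {0}"
      using \<open>P \<noteq> {0}\<close> \<open>Q \<noteq> {0}\<close> vs1.subspace_0[OF P] vs1.subspace_0[OF Q] by blast+
    then show "f ` P \<noteq> {0}" "f ` Q \<noteq> {0}"
      unfolding image_subset_zero_iff[OF inj X0 \<open>P \<subseteq> X0\<close>, symmetric]
        image_subset_zero_iff[OF inj X0 \<open>Q \<subseteq> X0\<close>, symmetric] by blast+
  qed
  ultimately show ?thesis
    unfolding nontrivial_decomposition_def ev_image[OF inj rep]
    using subspace_image[OF P] subspace_image[OF Q] by blast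
qed

lemma indecomposable_image:
  assumes inj: "inj_on f X0" and rep: "is_rep s1 X0 Xs Ys" and ind: "indecomposable s1 X0 Xs Ys"
  shows "indecomposable s2 (f ` X0) (\<lambda>i. f ` Xs i) (\<lambda>i. f ` Ys i)"
proof -
  interpret vector_space_pair s1 s2 by unfold_locales
  have "Vector_Spaces.linear s1 s2 f" by unfold_locales
  then obtain g where g: "Vector_Spaces.linear s2 s1 g" "\<And>v. v \<in> X0 \<Longrightarrow> g (f v) = v"
    using linear_exists_left_inverse_on[OF _ vs1.is_repD(1)[OF rep] inj] by blast
  interpret G: Vector_Spaces.linear s2 s1 g by (fact g(1))
  have gf: "g ` f ` U = U" if "U \<subseteq> X0" for U
    using that g(2) by (force simp: image_image)
  have Xs: "Xs i \<subseteq> X0" and Ys: "Ys i \<subseteq> X0" for i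
    using vs1.is_repD[OF rep] by blast+
  have inj_g: "inj_on g (f ` X0)" using g(2) by (auto intro!: inj_onI)
  have "X0 \<noteq> {0}" and no_dec: "\<not> nontrivial_decomposition s1 X0 Xs Ys P Q" for P Q
    using ind unfolding indecomposable_iff by auto
  then have "f ` X0 \<noteq> {0}" using gf[of X0] by auto
  moreover have "\<not> nontrivial_decomposition s2 (f ` X0) (\<lambda>i. f ` Xs i) (\<lambda>i. f ` Ys i) P Q" for P Q
  proof
    assume "nontrivial_decomposition s2 (f ` X0) (\<lambda>i. f ` Xs i) (\<lambda>i. f ` Ys i) P Q"
    from G.nontrivial_decomposition_image[OF inj_g is_rep_image[OF rep] this]
    have "nontrivial_decomposition s1 X0 Xs Ys (g ` P) (g ` Q)"
      by (simp only: gf Xs Ys order_refl)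
    with no_dec show False by blast
  qed
  ultimately show ?thesis unfolding indecomposable_iff by blast
qed

end

lemma vector_space_uscale: "vector_space (uscale :: 'a::field \<Rightarrow> (nat \<Rightarrow> 'a) \<Rightarrow> _)"
  by unfold_locales (auto simp: uscale_def fun_eq_iff algebra_simps)

definition unit_vec :: "nat \<Rightarrow> nat \<Rightarrow> 'a::field" where
  "unit_vec k n = (if n = k then 1 else 0)"

lemma inj_unit_vec: "inj unit_vec"
  by (rule injI) (metis unit_vec_def zero_neq_one)

lemma sum_apply: "(\<Sum>x\<in>A. g x) n = (\<Sum>x\<in>A. g x n :: 'b::comm_monoid_add)"
  by (induction A rule: infinite_finite_induct) auto

lemma independent_unit_vec:
  "\<not> module.dependent uscale (range (unit_vec :: nat \<Rightarrow> nat \<Rightarrow> 'a::field))"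
proof -
  interpret U: vector_space "uscale :: 'a \<Rightarrow> (nat \<Rightarrow> 'a) \<Rightarrow> _" by (rule vector_space_uscale)
  show ?thesis
    unfolding U.independent_explicit_finite_subsets
  proof (intro allI impI ballI)
    fix S u v
    assume S: "S \<subseteq> range unit_vec" "finite S" and sum: "(\<Sum>v\<in>S. uscale (u v) v) = 0" and "v \<in> S"
    then obtain k where k: "v = unit_vec k" by blast
    have "u w * w k = (if w = v then u w else 0)" if w: "w \<in> S" for w
    proof -
      obtain j where "w = unit_vec j" using w S(1) by blast
      then show ?thesis using inj_unit_vec unfolding k by (auto simp: unit_vec_def inj_def)
    qed
    then have "(\<Sum>w\<in>S. uscale (u w) w) k = (\<Sum>w\<in>S. if w = v then u w else 0)"
      unfolding sum_apply uscale_def by (rule sum.cong[OF refl])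
    also have "\<dots> = u v" using S(2) \<open>v \<in> S\<close> by simp
    finally show "u v = 0" using sum by simp
  qed
qed

lemma linear_embedding_uscale:
  fixes s :: "'a::field \<Rightarrow> 'v::ab_group_add \<Rightarrow> 'v"
  assumes "vector_space s" "finite B"
  obtains f where "Vector_Spaces.linear s uscale f" "inj_on f (module.span s B)"
proof -
  interpret V: vector_space s by fact
  interpret U: vector_space "uscale :: 'a \<Rightarrow> (nat \<Rightarrow> 'a) \<Rightarrow> _" by (rule vector_space_uscale)
  interpret VU: vector_space_pair s "uscale :: 'a \<Rightarrow> (nat \<Rightarrow> 'a) \<Rightarrow> _" by unfold_locales
  obtain B' where B': "B' \<subseteq> B" "V.independent B'" "B \<subseteq> V.span B'"
    using V.maximal_independent_subset by blast
  obtain h :: "'v \<Rightarrow> nat" where h: "inj_on h B'"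
    using finite_imp_inj_to_nat_seg[OF finite_subset[OF B'(1) assms(2)]] by blast
  obtain f where f: "Vector_Spaces.linear s uscale f" "\<And>b. b \<in> B' \<Longrightarrow> f b = unit_vec (h b)"
    using VU.linear_independent_extend[OF B'(2), of "\<lambda>b. unit_vec (h b)"] by blast
  have "f ` B' \<subseteq> range unit_vec" using f(2) by auto
  then have "U.independent (f ` B')" using U.independent_mono[OF independent_unit_vec] by blast
  moreover have "inj_on f B'"
  proof (rule inj_onI)
    fix x y assume "x \<in> B'" "y \<in> B'" "f x = f y"
    then have "h x = h y" using f(2) inj_unit_vec by (metis injD)
    then show "x = y" using h \<open>x \<in> B'\<close> \<open>y \<in> B'\<close> by (meson inj_onD)
  qed
  ultimately have "inj_on f (V.span B')" by (rule VU.linear_inj_on_span_independent_image[OF f(1)])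
  moreover have "V.span B' = V.span B" using B'(1,3) V.span_eq V.span_superset by blast
  ultimately show thesis using that f(1) by simp
qed

lemma perfect_ev_trivial:
  fixes s :: "'a::field \<Rightarrow> 'v::ab_group_add \<Rightarrow> 'v"
  assumes "vector_space s" and rep: "is_rep s X0 Xs Ys" and ind: "indecomposable s X0 Xs Ys"
    and "perfect TYPE('a) a"
  shows "ev X0 Xs Ys a = {0} \<or> ev X0 Xs Ys a = X0"
proof -
  interpret V: vector_space s by fact
  obtain B where "finite B" "V.span B = X0" using rep unfolding is_rep_def by blast
  then obtain f where f: "Vector_Spaces.linear s uscale f" "inj_on f X0"
    using linear_embedding_uscale[OF \<open>vector_space s\<close>] by metis
  interpret L: Vector_Spaces.linear s uscale f by (fact f(1))
  have E: "ev X0 Xs Ys a \<subseteq> X0" using V.ev_subset_top[OF rep] .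
  have "0 \<in> X0" using V.subspace_0[OF V.is_repD(1)[OF rep]] .
  from \<open>perfect TYPE('a) a\<close>
  have "is_rep uscale X Xs' Ys' \<and> indecomposable uscale X Xs' Ys' \<longrightarrow> ev X Xs' Ys' a \<in> {{0}, X}"
    for X :: "(nat \<Rightarrow> 'a) set" and Xs' Ys'
    unfolding perfect_def by blast
  then have "ev (f ` X0) (\<lambda>i. f ` Xs i) (\<lambda>i. f ` Ys i) a \<in> {{0}, f ` X0}"
    using L.is_rep_image[OF rep] L.indecomposable_image[OF f(2) rep ind] by blast
  then have "f ` ev X0 Xs Ys a = {0} \<or> f ` ev X0 Xs Ys a = f ` X0"
    unfolding L.ev_image[OF f(2) rep] by blast
  then show ?thesis
  proof
    assume "f ` ev X0 Xs Ys a = {0}"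
    then have "ev X0 Xs Ys a \<subseteq> {0}" using L.image_subset_zero_iff[OF f(2) \<open>0 \<in> X0\<close> E] by simp
    then show ?thesis using V.subspace_0[OF V.subspace_ev_rep[OF rep]] by blast
  next
    assume "f ` ev X0 Xs Ys a = f ` X0"
    then show ?thesis using inj_on_image_eq_iff[OF f(2) E order_refl] by simp
  qed
qed

section \<open>The representation Phi^+ rho\<close>

definition scale3 :: "('a \<Rightarrow> 'v \<Rightarrow> 'v) \<Rightarrow> 'a \<Rightarrow> 'v \<times> 'v \<times> 'v \<Rightarrow> 'v \<times> 'v \<times> 'v" where
  "scale3 s c = map_prod (s c) (map_prod (s c) (s c))"

definition embed :: "idx \<Rightarrow> 'v::zero \<Rightarrow> 'v \<times> 'v \<times> 'v" where
  "embed i v = (if i = i1 then v else 0, if i = i2 then v else 0, if i = i3 then v else 0)"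

lemma UNIV_idx: "UNIV = {i1, i2, i3}"
  using idx.exhaust by blast

lemma coord_add [simp]: "coord i (x + y) = coord i x + coord i y"
  by (cases i; cases x; cases y) auto

lemma coord_zero [simp]: "coord i 0 = 0"
  by (cases i) (auto simp: zero_prod_def)

lemma coord_diff [simp]: "coord i (x - y) = coord i x - coord i y"
  by (cases i; cases x; cases y) auto

lemma coord_scale3 [simp]: "coord i (scale3 s c t) = s c (coord i t)"
  by (cases i; cases t) (auto simp: scale3_def)

lemma coord_embed [simp]: "coord j (embed i v) = (if j = i then v else 0)"
  by (cases i; cases j) (auto simp: embed_def)

lemma coord_triple: "coord i (f i1, f i2, f i3) = f i"
  by (cases i) auto

lemma triple_eq_iff: "t = t' \<longleftrightarrow> (\<forall>i. coord i t = coord i t')"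
  by (cases t; cases t') (metis coord.simps)

lemma sum_embed_coord: "t = embed i1 (coord i1 t) + embed i2 (coord i2 t) + embed i3 (coord i3 t)"
  for t :: "'v::monoid_add \<times> 'v \<times> 'v"
  by (cases t) (simp add: embed_def)

lemma vector_space_scale3:
  assumes "vector_space s" shows "vector_space (scale3 s)"
proof -
  interpret vector_space s by fact
  show ?thesis by unfold_locales (auto simp: scale3_def algebra_simps)
qed

lemma linear_coord:
  assumes "vector_space s" shows "Vector_Spaces.linear (scale3 s) s (coord i)"
  using vector_space_scale3[OF assms] assms
  unfolding Vector_Spaces.linear_iff_module_hom module_hom_iff module_iff_vector_space by simp

lemma linear_embed:
  assumes "vector_space s" shows "Vector_Spaces.linear s (scale3 s) (embed i)"
proof -
  interpret vector_space s by fact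
  have "embed i (x + y) = embed i x + embed i y" "embed i (s c x) = scale3 s c (embed i x)" for x y c
    unfolding triple_eq_iff[of "embed i _"] by auto
  then show ?thesis using vector_space_scale3[OF assms] assms
    unfolding Vector_Spaces.linear_iff_module_hom module_hom_iff module_iff_vector_space by simp
qed

lemma mem_X10: "t \<in> X10 Ys \<longleftrightarrow> (\<forall>i. coord i t \<in> Ys i) \<and> coord i1 t + coord i2 t + coord i3 t = 0"
  unfolding X10_def Rsp_def by auto

lemma Hp_Int_X10: "Hp Ys i \<inter> X10 Ys = X10 Ys \<inter> coord i -` {0}"
  unfolding Hp_def X10_def by auto

lemma Gp_Int_X10: "Gp Xs Ys i \<inter> X10 Ys = X10 Ys \<inter> coord i -` Xs i"
  unfolding Gp_def X10_def by auto

locale D222_rep = vector_space s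
  for s :: "'a::field \<Rightarrow> 'v::ab_group_add \<Rightarrow> 'v" +
  fixes X0 :: "'v set" and Xs Ys :: "idx \<Rightarrow> 'v set"
  assumes is_rep: "is_rep s X0 Xs Ys"
begin

sublocale triples: vector_space "scale3 s"
  by (rule vector_space_scale3) unfold_locales

lemmas subspace_X0 = is_repD(1)[OF is_rep]
  and subspace_Xs = is_repD(2)[OF is_rep]
  and subspace_Ys = is_repD(3)[OF is_rep]
  and Xs_subset_Ys = is_repD(4)[OF is_rep]
  and Ys_subset_X0 = is_repD(5)[OF is_rep]

lemma subspace_X10: "triples.subspace (X10 Ys)"
  unfolding triples.subspace_def
proof (intro conjI ballI allI)
  show "0 \<in> X10 Ys" using subspace_0[OF subspace_Ys] by (simp add: mem_X10)
  fix x y assume "x \<in> X10 Ys" "y \<in> X10 Ys"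
  moreover have "coord i1 (x + y) + coord i2 (x + y) + coord i3 (x + y) =
      (coord i1 x + coord i2 x + coord i3 x) + (coord i1 y + coord i2 y + coord i3 y)"
    by (simp add: algebra_simps)
  ultimately show "x + y \<in> X10 Ys" using subspace_add[OF subspace_Ys] by (simp add: mem_X10)
next
  fix c x assume "x \<in> X10 Ys"
  then show "scale3 s c x \<in> X10 Ys"
    using subspace_scale[OF subspace_Ys] by (simp add: mem_X10 scale_right_distrib[symmetric])
qed

lemma finite_span_X10: "\<exists>B. finite B \<and> B \<subseteq> X10 Ys \<and> triples.span B = X10 Ys"
proof -
  obtain B where B: "finite B" "span B = X0" using is_rep unfolding is_rep_def by blast
  let ?F = "\<Union>i. embed i ` B"
  have "X10 Ys \<subseteq> triples.span ?F"
  proof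
    fix t assume "t \<in> X10 Ys"
    have "embed i (coord i t) \<in> triples.span ?F" for i
    proof -
      interpret embed: Vector_Spaces.linear s "scale3 s" "embed i"
        by (rule linear_embed) unfold_locales
      have "coord i t \<in> span B" using \<open>t \<in> X10 Ys\<close> Ys_subset_X0 B(2) unfolding mem_X10 by blast
      then have "embed i (coord i t) \<in> triples.span (embed i ` B)"
        using embed.span_image by blast
      then show ?thesis using triples.span_mono[of "embed i ` B" ?F] by blast
    qed
    then show "t \<in> triples.span ?F" using sum_embed_coord[of t] triples.span_add by metis
  qed
  moreover have "finite ?F" using B(1) by (simp add: UNIV_idx)
  ultimately show ?thesis using triples.finite_span_subspace[OF subspace_X10] by metis
qed

lemma is_rep_PhiPlus:
  "is_rep (scale3 s) (X10 Ys) (\<lambda>i. Hp Ys i \<inter> X10 Ys) (\<lambda>i. Gp Xs Ys i \<inter> X10 Ys)"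
  unfolding is_rep_def Hp_Int_X10 Gp_Int_X10
proof (intro conjI allI finite_span_X10 subspace_X10)
  fix i
  interpret coord: Vector_Spaces.linear "scale3 s" s "coord i" by (rule linear_coord) unfold_locales
  show "triples.subspace (X10 Ys \<inter> coord i -` {0})" "triples.subspace (X10 Ys \<inter> coord i -` Xs i)"
    using coord.subspace_vimage subspace_single_0 subspace_Xs subspace_X10 triples.subspace_inter by blast+
  show "X10 Ys \<inter> coord i -` {0} \<subseteq> X10 Ys \<inter> coord i -` Xs i"
    using subspace_0[OF subspace_Xs] by auto
qed auto

lemma PhiPlus_ev_subset_X10: "PhiPlus_ev Xs Ys a \<subseteq> X10 Ys"
  unfolding PhiPlus_ev_def by (rule triples.ev_subset_top[OF is_rep_PhiPlus])

lemma zero_in_PhiPlus_ev: "0 \<in> PhiPlus_ev Xs Ys a"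
  unfolding PhiPlus_ev_def by (rule triples.subspace_0[OF triples.subspace_ev_rep[OF is_rep_PhiPlus]])

lemma subspace_coord_image:
  assumes "triples.subspace T" shows "subspace (coord i ` T)"
proof -
  interpret coord: Vector_Spaces.linear "scale3 s" s "coord i" by (rule linear_coord) unfold_locales
  show ?thesis using coord.subspace_image[OF assms] .
qed

lemma ssum3_coord_image_nonzero:
  assumes "triples.subspace T" "T \<noteq> {0}"
  shows "ssum3 (\<lambda>i. coord i ` T) \<noteq> {0}"
proof -
  obtain t where "t \<in> T" "t \<noteq> 0" using assms triples.subspace_0 by blast
  then obtain i where "coord i t \<noteq> 0" using triple_eq_iff[of t 0] by auto
  moreover have "coord i t \<in> ssum3 (\<lambda>i. coord i ` T)"
    using subset_ssum3[of "\<lambda>i. coord i ` T" i] \<open>t \<in> T\<close> triples.subspace_0[OF assms(1)] by force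
  ultimately show ?thesis by blast
qed

end

section \<open>Indecomposability of Phi^+ rho\<close>

locale PhiPlus_decomposition = D222_rep +
  fixes A B
  assumes decomposition: "nontrivial_decomposition (scale3 s) (X10 Ys)
    (\<lambda>i. Hp Ys i \<inter> X10 Ys) (\<lambda>i. Gp Xs Ys i \<inter> X10 Ys) A B"
begin

lemma subspace_A: "triples.subspace A" and subspace_B: "triples.subspace B"
  and A_Int_B: "A \<inter> B = {0}" and ssum_A_B: "ssum A B = X10 Ys" and A_nonzero: "A \<noteq> {0}" and B_nonzero: "B \<noteq> {0}"
  using decomposition unfolding nontrivial_decomposition_def by auto

lemma splits_PhiPlus: "splits A B (PhiPlus_ev Xs Ys a)"
  using decomposition unfolding nontrivial_decomposition_def PhiPlus_ev_def by blast

lemma splits_kernel: "splits A B (X10 Ys \<inter> coord i -` {0})"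
  using splits_PhiPlus[of "Xg i"] by (simp add: PhiPlus_ev_def Hp_Int_X10)

lemma splits_preimage_Xs: "splits A B (X10 Ys \<inter> coord i -` Xs i)"
  using splits_PhiPlus[of "Yg i"] by (simp add: PhiPlus_ev_def Gp_Int_X10)

lemma A_subset_X10: "A \<subseteq> X10 Ys"
  using ssum_A_B subset_ssum_left[OF triples.subspace_0[OF subspace_B]] by blast

lemma B_subset_X10: "B \<subseteq> X10 Ys"
  using ssum_A_B subset_ssum_right[OF triples.subspace_0[OF subspace_A]] by blast

definition projA where "projA i = coord i ` A"

definition projB where "projB i = coord i ` B"

definition projW where "projW i = coord i ` X10 Ys"

lemma subspace_projA: "subspace (projA i)"
  and subspace_projB: "subspace (projB i)"
  and subspace_projW: "subspace (projW i)"
  unfolding projA_def projB_def projW_def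
  using subspace_coord_image subspace_A subspace_B subspace_X10 by blast+

lemma projA_subset_projW: "projA i \<subseteq> projW i"
  unfolding projA_def projW_def using A_subset_X10 by blast

lemma projB_subset_projW: "projB i \<subseteq> projW i"
  unfolding projB_def projW_def using B_subset_X10 by blast

lemma projW_subset_Ys: "projW i \<subseteq> Ys i"
  unfolding projW_def using mem_X10 by blast

lemma projW_eq: "projW i = ssum (projA i) (projB i)"
  unfolding projW_def projA_def projB_def ssum_A_B[symmetric] by (rule image_ssum) simp

lemma projA_Int_projB: "projA i \<inter> projB i = {0}"
proof -
  have "x = 0" if x: "x \<in> projA i" "x \<in> projB i" for x
  proof -
    obtain a b where ab: "a \<in> A" "b \<in> B" "x = coord i a" "x = coord i b"
      using x unfolding projA_def projB_def by blast
    have "a - b \<in> X10 Ys"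
      using triples.subspace_diff[OF subspace_X10] ab(1,2) A_subset_X10 B_subset_X10 by blast
    moreover have "coord i (a - b) = 0" using ab(3,4) by simp
    ultimately have "a - b \<in> X10 Ys \<inter> coord i -` {0}" by simp
    then obtain h h' where h: "h \<in> X10 Ys \<inter> coord i -` {0} \<inter> A"
      "h' \<in> X10 Ys \<inter> coord i -` {0} \<inter> B" "a - b = h + h'"
      by (rule splitsD[OF splits_kernel])
    have "a - h \<in> A" using triples.subspace_diff[OF subspace_A ab(1)] h(1) by blast
    moreover have "a - h = b + h'" using h(3) by (simp add: algebra_simps)
    moreover have "b + h' \<in> B" using triples.subspace_add[OF subspace_B ab(2)] h(2) by blast
    ultimately have "a - h \<in> A \<inter> B" by simp
    then have "a = h" using A_Int_B by simp
    then show "x = 0" using ab(3) h(1) by simp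
  qed
  then show ?thesis using subspace_0[OF subspace_projA] subspace_0[OF subspace_projB] by auto
qed

lemma Xs_Int_projW_subset: "Xs i \<inter> projW i \<subseteq> ssum (Xs i \<inter> projA i) (Xs i \<inter> projB i)"
proof
  fix x assume "x \<in> Xs i \<inter> projW i"
  then obtain w where w: "w \<in> X10 Ys \<inter> coord i -` Xs i" "x = coord i w"
    unfolding projW_def by blast
  obtain g g' where g: "g \<in> X10 Ys \<inter> coord i -` Xs i \<inter> A" "g' \<in> X10 Ys \<inter> coord i -` Xs i \<inter> B"
    "w = g + g'"
    by (rule splitsD[OF splits_preimage_Xs w(1)])
  have "coord i g \<in> Xs i \<inter> projA i" "coord i g' \<in> Xs i \<inter> projB i"
    using g(1,2) unfolding projA_def projB_def by blast+
  moreover have "x = coord i g + coord i g'" using w(2) g(3) by simp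
  ultimately show "x \<in> ssum (Xs i \<inter> projA i) (Xs i \<inter> projB i)" unfolding ssum_def by blast
qed

lemma coord_A_eq:
  assumes "a \<in> A" "b \<in> B" "\<alpha> \<in> projA i" "\<beta> \<in> projB i" "coord i a + coord i b = \<alpha> + \<beta>"
  shows "coord i a = \<alpha>"
proof -
  have "coord i a \<in> projA i" "coord i b \<in> projB i" using assms(1,2) unfolding projA_def projB_def by blast+
  then have "coord i a - \<alpha> \<in> projA i" "\<beta> - coord i b \<in> projB i"
    using assms(3,4) subspace_diff[OF subspace_projA] subspace_diff[OF subspace_projB] by blast+
  moreover have "coord i a - \<alpha> = \<beta> - coord i b" using assms(5) by (simp add: algebra_simps)
  ultimately have "coord i a - \<alpha> \<in> projA i \<inter> projB i" by simp
  then show ?thesis using projA_Int_projB by simp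
qed

lemma mem_projW:
  assumes "\<And>j. f j \<in> Ys j" "f i1 + f i2 + f i3 = 0"
  shows "f i \<in> projW i"
proof -
  have c: "coord j (f i1, f i2, f i3) = f j" for j by (rule coord_triple)
  then have "(f i1, f i2, f i3) \<in> X10 Ys" using assms unfolding mem_X10 by simp
  then show ?thesis unfolding projW_def by (rule image_eqI[where f = "coord i", OF c[of i, symmetric]])
qed

lemma sum_projA_eq_0:
  assumes a: "\<And>i. a i \<in> projA i" and b: "\<And>i. b i \<in> projB i"
    and sum: "(a i1 - b i1) + (a i2 - b i2) + (a i3 - b i3) = 0"
  shows "a i1 + a i2 + a i3 = 0"
proof -
  define d where "d = (a i1 - b i1, a i2 - b i2, a i3 - b i3)"
  have coord_d: "coord i d = a i - b i" for i by (cases i) (simp_all add: d_def)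
  have "a i - b i \<in> Ys i" for i
    using a[of i] b[of i] projA_subset_projW[of i] projB_subset_projW[of i] projW_subset_Ys[of i]
      subspace_diff[OF subspace_Ys[of i]] by blast
  with sum have "d \<in> ssum A B" unfolding ssum_A_B mem_X10 coord_d by simp
  then obtain \<alpha> \<beta> where \<alpha>\<beta>: "\<alpha> \<in> A" "\<beta> \<in> B" "d = \<alpha> + \<beta>"
    unfolding ssum_def by blast
  have "coord i \<alpha> = a i" for i
  proof (rule coord_A_eq[OF \<alpha>\<beta>(1,2) a])
    show "- b i \<in> projB i" using b subspace_neg[OF subspace_projB] by blast
    show "coord i \<alpha> + coord i \<beta> = a i + - b i"
      using coord_d[of i] unfolding \<alpha>\<beta>(3) by simp
  qed
  moreover have "\<alpha> \<in> X10 Ys" using \<alpha>\<beta>(1) A_subset_X10 by blast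
  ultimately show ?thesis unfolding mem_X10 by simp
qed

lemma projA_subset_ssum3: "projA i \<subseteq> ssum3 projA"
  using subset_ssum3 subspace_0[OF subspace_projA] .

lemma projB_subset_ssum3: "projB i \<subseteq> ssum3 projB"
  using subset_ssum3 subspace_0[OF subspace_projB] .

lemma complement_components_eq_0:
  assumes C: "\<And>i. C i \<subseteq> Ys i" "\<And>i. projW i \<inter> C i = {0}"
    and w: "\<And>i. w i \<in> projW i" and c: "\<And>i. c i \<in> C i"
    and sum: "(w i1 - c i1) + (w i2 - c i2) + (w i3 - c i3) = 0"
  shows "c i = 0"
proof -
  have "w j - c j \<in> Ys j" for j
    using w[of j] c[of j] projW_subset_Ys[of j] C(1)[of j] subspace_diff[OF subspace_Ys[of j]] by blast
  then have "w i - c i \<in> projW i" using mem_projW[of "\<lambda>j. w j - c j"] sum by simp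
  then have "w i - (w i - c i) \<in> projW i" using w[of i] subspace_diff[OF subspace_projW] by blast
  then have "c i \<in> projW i \<inter> C i" using c[of i] by simp
  then show ?thesis using C(2) by blast
qed

lemma ssum3_projA_Int:
  assumes C: "\<And>i. subspace (C i)" "\<And>i. C i \<subseteq> Ys i" "\<And>i. projW i \<inter> C i = {0}"
  shows "ssum3 projA \<inter> ssum (ssum3 projB) (ssum3 C) = {0}"
proof -
  have "x = 0" if x: "x \<in> ssum3 projA" "x \<in> ssum (ssum3 projB) (ssum3 C)" for x
  proof -
    obtain a where a: "\<And>i. a i \<in> projA i" and xa: "x = a i1 + a i2 + a i3"
      using x(1) unfolding mem_ssum3 by blast
    obtain b c where b: "\<And>i. b i \<in> projB i" and c: "\<And>i. c i \<in> C i"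
      and xbc: "x = (b i1 + b i2 + b i3) + (c i1 + c i2 + c i3)"
      using x(2) unfolding ssum_def mem_ssum3 by blast
    have ab: "a i - b i \<in> projW i" for i
      using a[of i] b[of i] projA_subset_projW[of i] projB_subset_projW[of i]
        subspace_diff[OF subspace_projW[of i]] by blast
    have "((a i1 - b i1) - c i1) + ((a i2 - b i2) - c i2) + ((a i3 - b i3) - c i3) =
        (a i1 + a i2 + a i3) - ((b i1 + b i2 + b i3) + (c i1 + c i2 + c i3))"
      by (simp add: algebra_simps)
    also have "\<dots> = 0" using xa xbc by simp
    finally have sum_abc: "((a i1 - b i1) - c i1) + ((a i2 - b i2) - c i2) + ((a i3 - b i3) - c i3) = 0" .
    then have "c i = 0" for i by (rule complement_components_eq_0[OF C(2,3) ab c])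
    with sum_abc have "(a i1 - b i1) + (a i2 - b i2) + (a i3 - b i3) = 0" by simp
    then show "x = 0" using sum_projA_eq_0[OF a b] xa by simp
  qed
  moreover have "0 \<in> ssum3 projA" using subspace_0[OF subspace_ssum3[of projA, OF subspace_projA]] .
  moreover have "0 \<in> ssum (ssum3 projB) (ssum3 C)"
    using subspace_0[OF subspace_ssum[OF subspace_ssum3[of projB, OF subspace_projB] subspace_ssum3[OF C(1)]]] .
  ultimately show ?thesis by blast
qed

lemma splits_Ys:
  assumes "ssum (projW i) (C i) = Ys i" "C i \<subseteq> Ys i"
    and Q: "subspace Q" "projB i \<subseteq> Q" "C i \<subseteq> Q"
  shows "splits (ssum3 projA) Q (Ys i)"
proof (rule splitsI[OF subspace_Ys, where V = "projA i" and W = "ssum (projB i) (C i)"])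
  show "Ys i \<subseteq> ssum (projA i) (ssum (projB i) (C i))"
    unfolding assms(1)[symmetric] projW_eq ssum_assoc ..
  show "projA i \<subseteq> Ys i \<inter> ssum3 projA"
    using projA_subset_projW[of i] projW_subset_Ys[of i] projA_subset_ssum3[of i] by blast
  have "projB i \<subseteq> Ys i" using projB_subset_projW[of i] projW_subset_Ys[of i] by blast
  then show "ssum (projB i) (C i) \<subseteq> Ys i \<inter> Q"
    using ssum_subset_subspace[OF subspace_Ys _ assms(2)] ssum_subset_subspace[OF Q] by blast
qed

lemma splits_Xs:
  assumes "Xs i \<subseteq> ssum (Xs i \<inter> projW i) (Xs i \<inter> C i)"
    and Q: "subspace Q" "projB i \<subseteq> Q" "C i \<subseteq> Q"
  shows "splits (ssum3 projA) Q (Xs i)"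
proof (rule splitsI[OF subspace_Xs,
      where V = "Xs i \<inter> projA i" and W = "ssum (Xs i \<inter> projB i) (Xs i \<inter> C i)"])
  have "ssum (Xs i \<inter> projW i) (Xs i \<inter> C i) \<subseteq>
      ssum (ssum (Xs i \<inter> projA i) (Xs i \<inter> projB i)) (Xs i \<inter> C i)"
    by (rule ssum_mono[OF Xs_Int_projW_subset order_refl])
  with assms(1) show "Xs i \<subseteq> ssum (Xs i \<inter> projA i) (ssum (Xs i \<inter> projB i) (Xs i \<inter> C i))"
    unfolding ssum_assoc by (rule subset_trans)
  show "Xs i \<inter> projA i \<subseteq> Xs i \<inter> ssum3 projA" using projA_subset_ssum3[of i] by blast
  have "ssum (Xs i \<inter> projB i) (Xs i \<inter> C i) \<subseteq> Xs i"
    by (rule ssum_subset_subspace[OF subspace_Xs]) blast+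
  moreover have "ssum (Xs i \<inter> projB i) (Xs i \<inter> C i) \<subseteq> Q"
    by (rule ssum_subset_subspace[OF Q(1)]) (use Q(2,3) in blast)+
  ultimately show "ssum (Xs i \<inter> projB i) (Xs i \<inter> C i) \<subseteq> Xs i \<inter> Q" by blast
qed

lemma nontrivial_decomposition_projA:
  assumes C: "\<And>i. subspace (C i)" "\<And>i. C i \<subseteq> Ys i" "\<And>i. ssum (projW i) (C i) = Ys i"
      "\<And>i. Xs i \<subseteq> ssum (Xs i \<inter> projW i) (Xs i \<inter> C i)"
    and Q: "subspace Q" "ssum (ssum3 projB) (ssum3 C) \<subseteq> Q" "ssum3 projA \<inter> Q = {0}"
      "ssum (ssum3 projA) Q = X0"
  shows "nontrivial_decomposition s X0 Xs Ys (ssum3 projA) Q"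
proof -
  have P: "subspace (ssum3 projA)" using subspace_ssum3[of projA, OF subspace_projA] .
  have "ssum3 projB \<subseteq> ssum (ssum3 projB) (ssum3 C)" "ssum3 C \<subseteq> ssum (ssum3 projB) (ssum3 C)"
    using subset_ssum_left[OF subspace_0[OF subspace_ssum3[OF C(1)]]]
      subset_ssum_right[OF subspace_0[OF subspace_ssum3[of projB, OF subspace_projB]]] .
  then have B_Q: "ssum3 projB \<subseteq> Q" and C_Q: "C i \<subseteq> Q" for i
    using Q(2) subset_ssum3[of C i, OF subspace_0[OF C(1)]] by blast+
  have projB_Q: "projB i \<subseteq> Q" for i using projB_subset_ssum3[of i] B_Q by blast
  have "ssum3 projA \<noteq> {0}" "ssum3 projB \<noteq> {0}"
    using ssum3_coord_image_nonzero[OF subspace_A A_nonzero]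
      ssum3_coord_image_nonzero[OF subspace_B B_nonzero]
    unfolding projA_def[abs_def] projB_def[abs_def] by blast+
  then have "Q \<noteq> {0}" using B_Q subspace_0[OF subspace_ssum3[of projB, OF subspace_projB]] by blast
  have "ssum3 projA \<subseteq> X0" "Q \<subseteq> X0"
    using Q(4) subset_ssum_left[OF subspace_0[OF Q(1)]] subset_ssum_right[OF subspace_0[OF P]]
    by blast+
  then have "splits (ssum3 projA) Q X0"
    by (intro splitsI[OF subspace_X0, where V = "ssum3 projA" and W = Q]) (use Q(4) in auto)
  moreover have "splits (ssum3 projA) Q (Xs i)" "splits (ssum3 projA) Q (Ys i)" for i
    using splits_Xs[OF C(4) Q(1) projB_Q C_Q] splits_Ys[OF C(3,2) Q(1) projB_Q C_Q] .
  ultimately have "splits (ssum3 projA) Q (ev X0 Xs Ys a)" for a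
    by (rule splits_ev[OF P Q(1,3) subspace_X0 subspace_Xs subspace_Ys])
  then show ?thesis
    unfolding nontrivial_decomposition_def
    using P Q(1,3,4) \<open>ssum3 projA \<noteq> {0}\<close> \<open>Q \<noteq> {0}\<close> by blast
qed

theorem not_indecomposable: "\<not> indecomposable s X0 Xs Ys"
proof -
  have "\<forall>i. \<exists>C. subspace C \<and> C \<subseteq> Ys i \<and> projW i \<inter> C = {0} \<and> ssum (projW i) C = Ys i \<and>
      Xs i \<subseteq> ssum (Xs i \<inter> projW i) (Xs i \<inter> C)"
  proof
    fix i
    show "\<exists>C. subspace C \<and> C \<subseteq> Ys i \<and> projW i \<inter> C = {0} \<and> ssum (projW i) C = Ys i \<and>
      Xs i \<subseteq> ssum (Xs i \<inter> projW i) (Xs i \<inter> C)"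
      by (rule complement_compatible[OF subspace_projW subspace_Xs subspace_Ys projW_subset_Ys
            Xs_subset_Ys]) blast
  qed
  from choice[OF this] obtain C where "\<forall>i. subspace (C i) \<and> C i \<subseteq> Ys i \<and> projW i \<inter> C i = {0} \<and>
      ssum (projW i) (C i) = Ys i \<and> Xs i \<subseteq> ssum (Xs i \<inter> projW i) (Xs i \<inter> C i)"
    by blast
  then have C: "\<And>i. subspace (C i)" "\<And>i. C i \<subseteq> Ys i" "\<And>i. projW i \<inter> C i = {0}"
    "\<And>i. ssum (projW i) (C i) = Ys i" "\<And>i. Xs i \<subseteq> ssum (Xs i \<inter> projW i) (Xs i \<inter> C i)"
    by simp_all
  have "projA i \<subseteq> X0" "projB i \<subseteq> X0" "C i \<subseteq> X0" for i
    using projA_subset_projW[of i] projB_subset_projW[of i] projW_subset_Ys[of i] C(2)[of i]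
      Ys_subset_X0[of i] by blast+
  then have A0: "ssum3 projA \<subseteq> X0" and B0: "ssum3 projB \<subseteq> X0" and C0: "ssum3 C \<subseteq> X0"
    using ssum3_subset_subspace[OF subspace_X0] by metis+
  obtain Q where "subspace Q" "ssum (ssum3 projB) (ssum3 C) \<subseteq> Q" "ssum3 projA \<inter> Q = {0}"
      "ssum (ssum3 projA) Q = X0"
    by (rule complement_containing[OF subspace_ssum3[of projA, OF subspace_projA]
          subspace_ssum[OF subspace_ssum3[of projB, OF subspace_projB] subspace_ssum3[OF C(1)]]
          subspace_X0 A0 ssum_subset_subspace[OF subspace_X0 B0 C0] ssum3_projA_Int[OF C(1-3)]])
  then have "nontrivial_decomposition s X0 Xs Ys (ssum3 projA) Q"
    by (intro nontrivial_decomposition_projA[OF C(1,2,4,5)])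
  then show ?thesis unfolding indecomposable_iff by blast
qed

end

context D222_rep
begin

lemma indecomposable_PhiPlus:
  assumes "indecomposable s X0 Xs Ys" "X10 Ys \<noteq> {0}"
  shows "indecomposable (scale3 s) (X10 Ys) (\<lambda>i. Hp Ys i \<inter> X10 Ys) (\<lambda>i. Gp Xs Ys i \<inter> X10 Ys)"
proof -
  have "\<not> nontrivial_decomposition (scale3 s) (X10 Ys)
      (\<lambda>i. Hp Ys i \<inter> X10 Ys) (\<lambda>i. Gp Xs Ys i \<inter> X10 Ys) A B" for A B
  proof
    assume "nontrivial_decomposition (scale3 s) (X10 Ys)
      (\<lambda>i. Hp Ys i \<inter> X10 Ys) (\<lambda>i. Gp Xs Ys i \<inter> X10 Ys) A B"
    then have "PhiPlus_decomposition s X0 Xs Ys A B"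
      by (intro PhiPlus_decomposition.intro PhiPlus_decomposition_axioms.intro D222_rep_axioms)
    then have "\<not> indecomposable s X0 Xs Ys" by (rule PhiPlus_decomposition.not_indecomposable)
    then show False using assms(1) by contradiction
  qed
  with assms(2) show ?thesis unfolding indecomposable_iff by blast
qed

lemma perfect_PhiPlus_ev_trivial:
  assumes "indecomposable s X0 Xs Ys" "perfect TYPE('a) v"
  shows "PhiPlus_ev Xs Ys v = {0} \<or> PhiPlus_ev Xs Ys v = X10 Ys"
proof (cases "X10 Ys = {0}")
  case True
  then show ?thesis
    using triples.ev_subset_top[OF is_rep_PhiPlus] triples.subspace_0[OF triples.subspace_ev_rep[OF is_rep_PhiPlus]]
    unfolding PhiPlus_ev_def by blast
next
  case False
  have "vector_space (scale3 s)" by (rule vector_space_scale3) unfold_locales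
  from perfect_ev_trivial[OF this is_rep_PhiPlus indecomposable_PhiPlus[OF assms(1) False] assms(2)]
  show ?thesis unfolding PhiPlus_ev_def .
qed

end

section \<open>The sums S(a)\<close>

lemma Sset_eq_ssum3: "Sset Xs Ys a = ssum3 (\<lambda>i. coord i ` PhiPlus_ev Xs Ys a)"
  unfolding Sset_def ssum3_def ..

lemma PhiPlus_ev_Meet: "PhiPlus_ev Xs Ys (Meet a b) = PhiPlus_ev Xs Ys a \<inter> PhiPlus_ev Xs Ys b"
  unfolding PhiPlus_ev_def by simp

lemma Sset_Meet_commute: "Sset Xs Ys (Meet u v) = Sset Xs Ys (Meet v u)"
  unfolding Sset_eq_ssum3 PhiPlus_ev_Meet by (simp add: Int_commute)

context D222_rep
begin

lemma zero_in_Sset: "0 \<in> Sset Xs Ys a"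
proof -
  have "0 \<in> coord i ` PhiPlus_ev Xs Ys a" for i
    using zero_in_PhiPlus_ev by (metis coord_zero image_eqI)
  then show ?thesis
    unfolding Sset_eq_ssum3 using subset_ssum3[of "\<lambda>i. coord i ` PhiPlus_ev Xs Ys a" i1] by blast
qed

lemma Sset_Meet_perfect:
  assumes "indecomposable s X0 Xs Ys" "perfect TYPE('a) v"
  shows "Sset Xs Ys (Meet v u) = Sset Xs Ys v \<inter> Sset Xs Ys u"
  using perfect_PhiPlus_ev_trivial[OF assms]
proof
  assume v: "PhiPlus_ev Xs Ys v = {0}"
  then have "PhiPlus_ev Xs Ys (Meet v u) = {0}"
    using zero_in_PhiPlus_ev[of u] by (auto simp: PhiPlus_ev_Meet)
  then show ?thesis using v zero_in_Sset[of u] unfolding Sset_eq_ssum3 by (simp add: ssum3_zero)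
next
  assume v: "PhiPlus_ev Xs Ys v = X10 Ys"
  then have "PhiPlus_ev Xs Ys (Meet v u) = PhiPlus_ev Xs Ys u"
    using PhiPlus_ev_subset_X10[of u] by (auto simp: PhiPlus_ev_Meet)
  then have "Sset Xs Ys (Meet v u) = Sset Xs Ys u" unfolding Sset_eq_ssum3 by simp
  moreover have "Sset Xs Ys u \<subseteq> Sset Xs Ys v"
    unfolding Sset_eq_ssum3 v using PhiPlus_ev_subset_X10[of u] by (intro ssum3_mono image_mono)
  ultimately show ?thesis by (simp add: Int_absorb1)
qed

end

theorem mainTheorem17:
  fixes s :: "'a::field \<Rightarrow> 'v::ab_group_add \<Rightarrow> 'v"
    and X0 :: "'v set" and Xs Ys :: "idx \<Rightarrow> 'v set"
  assumes "vector_space s"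
    and "is_rep s X0 Xs Ys"
    and "indecomposable s X0 Xs Ys"
  shows "(\<forall>v1 v2 v3. perfect TYPE('a) v1 \<and> perfect TYPE('a) v2 \<and> perfect TYPE('a) v3 \<longrightarrow>
            Sset Xs Ys (Meet (Meet v1 v2) v3) = Sset Xs Ys v1 \<inter> Sset Xs Ys v2 \<inter> Sset Xs Ys v3)
       \<and> (\<forall>v u. perfect TYPE('a) v \<longrightarrow>
            Sset Xs Ys (Meet v u) = Sset Xs Ys v \<inter> Sset Xs Ys u)"
proof -
  have rep: "D222_rep s X0 Xs Ys"
    by (intro D222_rep.intro D222_rep_axioms.intro assms(1,2))
  have meet: "Sset Xs Ys (Meet v u) = Sset Xs Ys v \<inter> Sset Xs Ys u" if "perfect TYPE('a) v" for v u
    using D222_rep.Sset_Meet_perfect[OF rep assms(3) that] .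
  show ?thesis
  proof (intro conjI allI impI)
    fix v1 v2 v3 assume "perfect TYPE('a) v1 \<and> perfect TYPE('a) v2 \<and> perfect TYPE('a) v3"
    then have "Sset Xs Ys (Meet (Meet v1 v2) v3) = Sset Xs Ys v3 \<inter> Sset Xs Ys (Meet v1 v2)"
      unfolding Sset_Meet_commute[of Xs Ys "Meet v1 v2" v3] by (intro meet) simp
    also have "Sset Xs Ys (Meet v1 v2) = Sset Xs Ys v1 \<inter> Sset Xs Ys v2"
      using meet \<open>perfect TYPE('a) v1 \<and> _\<close> by simp
    finally show "Sset Xs Ys (Meet (Meet v1 v2) v3) = Sset Xs Ys v1 \<inter> Sset Xs Ys v2 \<inter> Sset Xs Ys v3"
      by (simp only: Int_ac)
  next
    fix v u assume "perfect TYPE('a) v"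
    then show "Sset Xs Ys (Meet v u) = Sset Xs Ys v \<inter> Sset Xs Ys u" by (rule meet)
  qed
qed

end
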